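(* Let $\tilde{\mathfrak{g}}$ be a real solvable Lie algebra with a metric $\langle,\rangle$ and a pseudo-Iwasawa decomposition $\tilde{\mathfrak{g}}=\mathfrak{g}\oplus^\perp\mathfrak{a}$. Let $H\in\tilde{\mathfrak g}$ be defined by $\langle H,v\rangle=\operatorname{Tr}(\operatorname{ad}v)$ for all $v\in\tilde{\mathfrak g}$. Then the Einstein equation $\widetilde{\operatorname{Ric}}=\lambda\,\mathrm{id}$ holds on $\tilde{\mathfrak{g}}$ if and only if (1) $\mathfrak{g}$ with the induced metric satisfies $\operatorname{Ric}=\lambda\,\mathrm{id}+D$, where $D=\operatorname{ad}H|_{\mathfrak g}$; and (2) $\operatorname{Tr}(\operatorname{ad}X\circ\operatorname{ad}Y)=-\lambda\langle X,Y\rangle$ for all $X,Y\in\mathfrak{a}$. In this case $\operatorname{Tr}D^2=-\lambda\operatorname{Tr}D$.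
   Context: A metric on a Lie algebra is a nondegenerate symmetric bilinear form, possibly indefinite; $\widetilde{\operatorname{Ric}}$ and $\operatorname{Ric}$ denote the Ricci operators of the corresponding left-invariant pseudo-Riemannian metrics on the simply connected Lie groups. A standard decomposition of a metric Lie algebra $\tilde{\mathfrak g}$ is a decomposition $\tilde{\mathfrak{g}}=\mathfrak{g}\oplus^\perp\mathfrak{a}$ as an orthogonal direct sum of vector spaces, where $\mathfrak{g}$ is a nilpotent ideal and $\mathfrak{a}$ is an abelian subalgebra. It is pseudo-Iwasawa if moreover $\operatorname{ad}X$ is self-adjoint with respect to $\langle,\rangle$ for every $X\in\mathfrak{a}$. *)

theory Defs
  imports "HOL-Analysis.Analysis"
begin

text \<open>A finite-dimensional real vector space is modelled by a type of class euclidean_space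
(its built-in inner product is NOT used). The Lie bracket br and the metric m are
bilinear maps on the whole ambient space; sub-Lie algebras are given by subspaces V.\<close>

definition lie_algebra :: "('a::euclidean_space \<Rightarrow> 'a \<Rightarrow> 'a) \<Rightarrow> bool" where
  "lie_algebra br \<longleftrightarrow> bilinear br \<and> (\<forall>x y. br x y = - br y x) \<and>
     (\<forall>x y z. br x (br y z) + br y (br z x) + br z (br x y) = 0)"

definition metric :: "('a::euclidean_space \<Rightarrow> 'a \<Rightarrow> real) \<Rightarrow> bool" where
  "metric m \<longleftrightarrow> bilinear m \<and> (\<forall>x y. m x y = m y x) \<and>
     (\<forall>x. (\<forall>y. m x y = 0) \<longrightarrow> x = 0)"

fun derived_series :: "('a::euclidean_space \<Rightarrow> 'a \<Rightarrow> 'a) \<Rightarrow> nat \<Rightarrow> 'a set" where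
  "derived_series br 0 = UNIV"
| "derived_series br (Suc k) =
     span {br x y | x y. x \<in> derived_series br k \<and> y \<in> derived_series br k}"

definition solvable :: "('a::euclidean_space \<Rightarrow> 'a \<Rightarrow> 'a) \<Rightarrow> bool" where
  "solvable br \<longleftrightarrow> (\<exists>k. derived_series br k = {0})"

fun lower_central :: "'a::euclidean_space set \<Rightarrow> ('a \<Rightarrow> 'a \<Rightarrow> 'a) \<Rightarrow> nat \<Rightarrow> 'a set" where
  "lower_central V br 0 = V"
| "lower_central V br (Suc k) =
     span {br x y | x y. x \<in> V \<and> y \<in> lower_central V br k}"

definition nilpotent_on :: "'a::euclidean_space set \<Rightarrow> ('a \<Rightarrow> 'a \<Rightarrow> 'a) \<Rightarrow> bool" where
  "nilpotent_on V br \<longleftrightarrow> (\<exists>k. lower_central V br k = {0})"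

definition lie_ideal :: "'a::euclidean_space set \<Rightarrow> ('a \<Rightarrow> 'a \<Rightarrow> 'a) \<Rightarrow> bool" where
  "lie_ideal V br \<longleftrightarrow> subspace V \<and> (\<forall>x y. y \<in> V \<longrightarrow> br x y \<in> V)"

definition abelian_subalgebra :: "'a::euclidean_space set \<Rightarrow> ('a \<Rightarrow> 'a \<Rightarrow> 'a) \<Rightarrow> bool" where
  "abelian_subalgebra A br \<longleftrightarrow> subspace A \<and> (\<forall>x\<in>A. \<forall>y\<in>A. br x y = 0)"

text \<open>Standard decomposition g~ = g (+)^perp a (the ambient space is g~ = UNIV).\<close>
definition standard_decomposition ::
  "('a::euclidean_space \<Rightarrow> 'a \<Rightarrow> 'a) \<Rightarrow> ('a \<Rightarrow> 'a \<Rightarrow> real) \<Rightarrow> 'a set \<Rightarrow> 'a set \<Rightarrow> bool" where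
  "standard_decomposition br m g a \<longleftrightarrow>
     lie_ideal g br \<and> nilpotent_on g br \<and> abelian_subalgebra a br \<and>
     g \<inter> a = {0} \<and> (\<forall>v. \<exists>x\<in>g. \<exists>y\<in>a. v = x + y) \<and>
     (\<forall>x\<in>g. \<forall>y\<in>a. m x y = 0)"

definition pseudo_iwasawa ::
  "('a::euclidean_space \<Rightarrow> 'a \<Rightarrow> 'a) \<Rightarrow> ('a \<Rightarrow> 'a \<Rightarrow> real) \<Rightarrow> 'a set \<Rightarrow> 'a set \<Rightarrow> bool" where
  "pseudo_iwasawa br m g a \<longleftrightarrow> standard_decomposition br m g a \<and>
     (\<forall>X\<in>a. \<forall>u v. m (br X u) v = m u (br X v))"

text \<open>Trace of an endomorphism f of a subspace V, computed in some basis of V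
(basis-independent).\<close>
definition trace_on :: "'a::euclidean_space set \<Rightarrow> ('a \<Rightarrow> 'a) \<Rightarrow> real" where
  "trace_on V f = (let B = (SOME B. B \<subseteq> V \<and> independent B \<and> span B = span V)
                   in \<Sum>b\<in>B. representation B (f b) b)"

text \<open>Levi-Civita connection of the left-invariant metric on the Lie algebra (V, br, m)
(Koszul formula): 2<nabla_x y, w> = <[x,y],w> - <[y,w],x> + <[w,x],y>.\<close>
definition lc_conn ::
  "'a::euclidean_space set \<Rightarrow> ('a \<Rightarrow> 'a \<Rightarrow> 'a) \<Rightarrow> ('a \<Rightarrow> 'a \<Rightarrow> real) \<Rightarrow> 'a \<Rightarrow> 'a \<Rightarrow> 'a" where
  "lc_conn V br m x y = (THE z. z \<in> V \<and>
     (\<forall>w\<in>V. 2 * m z w = m (br x y) w - m (br y w) x + m (br w x) y))"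

definition curv ::
  "'a::euclidean_space set \<Rightarrow> ('a \<Rightarrow> 'a \<Rightarrow> 'a) \<Rightarrow> ('a \<Rightarrow> 'a \<Rightarrow> real) \<Rightarrow> 'a \<Rightarrow> 'a \<Rightarrow> 'a \<Rightarrow> 'a" where
  "curv V br m x y z = lc_conn V br m x (lc_conn V br m y z) - lc_conn V br m y (lc_conn V br m x z)
                       - lc_conn V br m (br x y) z"

definition ricci_tensor ::
  "'a::euclidean_space set \<Rightarrow> ('a \<Rightarrow> 'a \<Rightarrow> 'a) \<Rightarrow> ('a \<Rightarrow> 'a \<Rightarrow> real) \<Rightarrow> 'a \<Rightarrow> 'a \<Rightarrow> real" where
  "ricci_tensor V br m x y = trace_on V (\<lambda>z. curv V br m z x y)"

definition ricci_op ::
  "'a::euclidean_space set \<Rightarrow> ('a \<Rightarrow> 'a \<Rightarrow> 'a) \<Rightarrow> ('a \<Rightarrow> 'a \<Rightarrow> real) \<Rightarrow> 'a \<Rightarrow> 'a" where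
  "ricci_op V br m x = (THE r. r \<in> V \<and> (\<forall>y\<in>V. m r y = ricci_tensor V br m x y))"

end

theory Submission
  imports Defs
begin

(* Write nabla~ and nabla for the Levi-Civita connections of g~ and of g with the induced
   metric. Since g is an ideal orthogonal to the abelian subalgebra a and every ad X, X in a,
   is self-adjoint, the Koszul formula gives nabla~_X = 0 and nabla~_v X = [v,X] for X in a,
   while for u, v in g the g-component of nabla~_u v is nabla_u v and its a-component A(u,v)
   is determined by <A(u,v),X> = <[X,u],v>. Computing the Ricci tensor as a trace in a dual
   basis adapted to g (+) a, and using that the trace over g of any map lowering the lower
   central series vanishes (g is nilpotent), one finds, for X, Y in a and u, v in g,
     ric~(X,Y) = - tr (ad X o ad Y),   ric~(u,Y) = ric~(Y,u) = 0,
     ric~(u,v) = ric(u,v) - <[H,u],v>,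
   and H lies in a. So the Einstein equation splits into its g-block, which is condition (1),
   and its a-block, which is condition (2). As ad H preserves g and kills a, condition (2)
   for X = Y = H reads tr D^2 = - lambda <H,H> = - lambda tr D. *)

section \<open>Traces and bases\<close>

definition trace_in_basis :: "'a::euclidean_space set \<Rightarrow> ('a \<Rightarrow> 'a) \<Rightarrow> real" where
  "trace_in_basis B f = (\<Sum>b\<in>B. representation B (f b) b)"

lemma representation_lincomb:
  assumes "independent B" "finite I" "\<And>i. i \<in> I \<Longrightarrow> v i \<in> span B"
  shows "representation B (\<Sum>i\<in>I. c i *\<^sub>R v i) b = (\<Sum>i\<in>I. c i * representation B (v i) b)"
  using assms
  by (simp add: real_vector.representation_sum real_vector.span_scale
      real_vector.representation_scale)

lemma representation_lincomb_basis:
  assumes "independent B" "finite B" "c \<in> B"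
  shows "representation B (\<Sum>b\<in>B. u b *\<^sub>R b) c = u c"
proof -
  have "representation B (\<Sum>b\<in>B. u b *\<^sub>R b) c = (\<Sum>b\<in>B. u b * representation B b c)"
    using assms by (intro representation_lincomb) (auto intro: span_base)
  also have "\<dots> = (\<Sum>b\<in>B. if b = c then u b else 0)"
    using assms(1) by (intro sum.cong) (auto simp: real_vector.representation_basis)
  finally show ?thesis using assms(2,3) by simp
qed

lemma representation_change_basis:
  assumes B: "independent B" and C: "independent C" "finite C" "C \<subseteq> span B" and x: "x \<in> span C"
  shows "representation B x b = (\<Sum>c\<in>C. representation C x c * representation B c b)"
proof -
  have "representation B x b = representation B (\<Sum>c\<in>C. representation C x c *\<^sub>R c) b"
    using real_vector.sum_representation_eq[OF C(1) x C(2)] by simp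
  also have "\<dots> = (\<Sum>c\<in>C. representation C x c * representation B c b)"
    using C(3) by (intro representation_lincomb[OF B C(2)]) auto
  finally show ?thesis .
qed

lemma trace_in_basis_change:
  assumes B: "independent B" and C: "independent C" and span_eq: "span B = span C"
    and f: "linear f" and f_span: "\<And>v. v \<in> span B \<Longrightarrow> f v \<in> span B"
  shows "trace_in_basis B f = trace_in_basis C f"
proof -
  have fin: "finite B" "finite C" using B C by (auto intro: finiteI_independent)
  have C_span: "c \<in> C \<Longrightarrow> c \<in> span B" for c
    using span_eq by (auto intro: span_base)
  have coord_B: "representation B (f b) b = (\<Sum>c\<in>C. representation C (f b) c * representation B c b)"
    if "b \<in> B" for b
    using f_span[OF span_base[OF that]] span_eq C_span
    by (intro representation_change_basis[OF B C fin(2)]) auto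
  have coord_C: "representation C (f c) c = (\<Sum>b\<in>B. representation B c b * representation C (f b) c)"
    if "c \<in> C" for c
  proof -
    have "f c = f (\<Sum>b\<in>B. representation B c b *\<^sub>R b)"
      using real_vector.sum_representation_eq[OF B C_span[OF that] fin(1)] by simp
    also have "\<dots> = (\<Sum>b\<in>B. representation B c b *\<^sub>R f b)"
      by (simp add: linear_sum[OF f] linear_scale[OF f])
    finally have "representation C (f c) c = representation C (\<Sum>b\<in>B. representation B c b *\<^sub>R f b) c"
      by simp
    also have "\<dots> = (\<Sum>b\<in>B. representation B c b * representation C (f b) c)"
      using f_span span_eq by (intro representation_lincomb[OF C fin(1)]) (auto intro: span_base)
    finally show ?thesis .
  qed
  have "trace_in_basis B f = (\<Sum>b\<in>B. \<Sum>c\<in>C. representation C (f b) c * representation B c b)"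
    unfolding trace_in_basis_def using coord_B by simp
  also have "\<dots> = (\<Sum>c\<in>C. \<Sum>b\<in>B. representation B c b * representation C (f b) c)"
    by (subst sum.swap) (simp only: mult.commute)
  also have "\<dots> = trace_in_basis C f"
    unfolding trace_in_basis_def using coord_C by simp
  finally show ?thesis .
qed

lemma trace_on_eq_trace_in_basis:
  assumes V: "subspace V" and B: "independent B" "span B = V"
    and f: "linear f" "\<And>v. v \<in> V \<Longrightarrow> f v \<in> V"
  shows "trace_on V f = trace_in_basis B f"
proof -
  define B0 where "B0 = (SOME B. B \<subseteq> V \<and> independent B \<and> span B = span V)"
  obtain B' where B': "B' \<subseteq> V" "independent B'" "V \<subseteq> span B'"
    using real_vector.basis_exists[of V] by metis
  have span_V: "span V = V" using V by (simp only: span_eq_iff)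
  have "span B' = span V"
    unfolding span_V by (rule real_vector.span_subspace[OF B'(1,3) V])
  then have "\<exists>B. B \<subseteq> V \<and> independent B \<and> span B = span V" using B' by blast
  then have "B0 \<subseteq> V \<and> independent B0 \<and> span B0 = span V"
    unfolding B0_def by (rule someI_ex)
  then have B0: "independent B0" "span B0 = span B"
    using B(2) V by simp_all
  have "trace_on V f = trace_in_basis B0 f"
    unfolding trace_on_def trace_in_basis_def B0_def Let_def ..
  also have "\<dots> = trace_in_basis B f"
    by (rule trace_in_basis_change) (use B0 B f V in simp_all)
  finally show ?thesis .
qed

lemma trace_on_restrict_range:
  assumes V: "subspace V" and W: "subspace W" "W \<subseteq> V"
    and f: "linear f" "\<And>v. v \<in> V \<Longrightarrow> f v \<in> W"
  shows "trace_on V f = trace_on W f"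
proof -
  obtain C where C: "C \<subseteq> W" "independent C" "W \<subseteq> span C"
    using real_vector.basis_exists[of W] by metis
  moreover from C W(2) have "C \<subseteq> V" by blast
  ultimately obtain B where B: "C \<subseteq> B" "B \<subseteq> V" "independent B" "V \<subseteq> span B"
    using real_vector.maximal_independent_subset_extend[of C V] by metis
  have span_C: "span C = W" by (rule real_vector.span_subspace[OF C(1,3) W(1)])
  have span_B: "span B = V" by (rule real_vector.span_subspace[OF B(2,4) V])
  have "trace_on V f = trace_in_basis B f"
    using V B span_B f W(2) by (intro trace_on_eq_trace_in_basis) auto
  also have "\<dots> = (\<Sum>b\<in>B. representation C (f b) b)"
    unfolding trace_in_basis_def
    using real_vector.representation_extend[OF B(3) _ B(1)] f(2) B(2) span_C
    by (intro sum.cong) auto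
  also have "\<dots> = trace_in_basis C f"
    unfolding trace_in_basis_def
    using finiteI_independent[OF B(3)] B(1)
    by (intro sum.mono_neutral_right) (auto dest: real_vector.representation_ne_zero)
  also have "\<dots> = trace_on W f"
    using W C span_C f V by (intro trace_on_eq_trace_in_basis[symmetric]) auto
  finally show ?thesis .
qed

lemma trace_on_nilpotent:
  assumes "subspace V" "linear f" "\<And>v. v \<in> V \<Longrightarrow> f v \<in> V" "\<And>v. v \<in> V \<Longrightarrow> (f ^^ k) v = 0"
  shows "trace_on V f = 0"
  using assms
proof (induction "dim V" arbitrary: V rule: less_induct)
  case less
  show ?case
  proof (cases "V = {0}")
    case True
    then have "trace_on V f = trace_in_basis {} f"
      using less.prems real_vector.independent_empty by (intro trace_on_eq_trace_in_basis) auto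
    then show ?thesis by (simp add: trace_in_basis_def)
  next
    case False
    define W where "W = f ` V"
    have W: "subspace W" "W \<subseteq> V"
      unfolding W_def using less.prems by (auto intro: linear_subspace_image)
    have "W \<noteq> V"
    proof
      assume "W = V"
      have "(f ^^ j) ` V = V" for j
      proof (induction j)
        case (Suc j)
        have "(f ^^ Suc j) ` V = (f ^^ j) ` (f ` V)" by (simp only: funpow_Suc_right image_comp)
        then show ?case using Suc \<open>W = V\<close> by (simp add: W_def)
      qed simp
      then have "V \<subseteq> {0}" using less.prems(4) by (metis image_subsetI singleton_iff)
      then show False using False less.prems(1) by (auto simp: subspace_def)
    qed
    moreover have "span W = W" "span V = V" using W less.prems(1) by (simp_all only: span_eq_iff)
    ultimately have "dim W < dim V" using W(2) dim_psubset[of W V] by (metis psubset_eq)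
    moreover have "trace_on V f = trace_on W f"
      using less.prems W by (intro trace_on_restrict_range) (auto simp: W_def)
    moreover have "f w \<in> W" "(f ^^ k) w = 0" if "w \<in> W" for w
      using that W(2) less.prems(4) by (auto simp: W_def)
    ultimately show ?thesis using less.hyps W less.prems(2) by simp
  qed
qed

lemma linear_inj_on_image_eq:
  fixes T :: "'a::euclidean_space \<Rightarrow> 'a"
  assumes T: "linear T" and V: "subspace V" "T ` V \<subseteq> V" and inj: "inj_on T V"
  shows "T ` V = V"
proof -
  have span_V: "span V = V" using V(1) by (simp only: span_eq_iff)
  have "dim (T ` V) = dim V" using dim_image_eq[OF T, of V] inj unfolding span_V by blast
  then have "span (T ` V) = span V" using dim_eq_span[OF V(2)] by simp
  moreover have "span (T ` V) = T ` V" using linear_subspace_image[OF T V(1)] by (simp only: span_eq_iff)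
  ultimately show ?thesis using span_V by simp
qed

section \<open>Dual bases of a symmetric bilinear form\<close>

definition nondegenerate_on :: "('a::euclidean_space \<Rightarrow> 'a \<Rightarrow> real) \<Rightarrow> 'a set \<Rightarrow> bool" where
  "nondegenerate_on m V \<longleftrightarrow> (\<forall>x\<in>V. (\<forall>y\<in>V. m x y = 0) \<longrightarrow> x = 0)"

definition dual_basis ::
  "('a::euclidean_space \<Rightarrow> 'a \<Rightarrow> real) \<Rightarrow> 'a set \<Rightarrow> 'a set \<Rightarrow> ('a \<Rightarrow> 'a) \<Rightarrow> bool" where
  "dual_basis m V B d \<longleftrightarrow> finite B \<and> B \<subseteq> V \<and> d ` B \<subseteq> V \<and> V \<subseteq> span B \<and>
     (\<forall>b\<in>B. \<forall>c\<in>B. m b (d c) = (if b = c then 1 else 0))"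

locale symmetric_bilinear_form =
  fixes m :: "'a::euclidean_space \<Rightarrow> 'a \<Rightarrow> real"
  assumes bilinear_form: "bilinear m" and symmetric: "m x y = m y x"
begin

lemma linear_form_left: "linear (\<lambda>x. m x y)" and linear_form_right: "linear (m x)"
  using bilinear_form by (simp_all add: bilinear_def)

lemmas form_simps [simp] =
  bilinear_ladd[OF bilinear_form] bilinear_radd[OF bilinear_form]
  bilinear_lsub[OF bilinear_form] bilinear_rsub[OF bilinear_form]
  bilinear_lmul[OF bilinear_form] bilinear_rmul[OF bilinear_form]
  bilinear_lneg[OF bilinear_form] bilinear_rneg[OF bilinear_form]
  bilinear_lzero[OF bilinear_form] bilinear_rzero[OF bilinear_form]

lemma form_sum_left: "m (\<Sum>i\<in>I. f i) z = (\<Sum>i\<in>I. m (f i) z)"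
  using linear_sum[OF linear_form_left] by simp

lemma form_sum_right: "m z (\<Sum>i\<in>I. f i) = (\<Sum>i\<in>I. m z (f i))"
  using linear_sum[OF linear_form_right] by simp

lemma nondegenerate_on_eqI:
  assumes "nondegenerate_on m V" "subspace V" "x \<in> V" "y \<in> V" "\<And>w. w \<in> V \<Longrightarrow> m x w = m y w"
  shows "x = y"
proof -
  have "x - y \<in> V" using assms by (simp add: subspace_diff)
  moreover have "\<forall>w\<in>V. m (x - y) w = 0" using assms(5) by simp
  ultimately have "x - y = 0" using assms(1) unfolding nondegenerate_on_def by blast
  then show ?thesis by simp
qed

lemma nondegenerate_on_eq_spanning_setI:
  assumes nondeg: "nondegenerate_on m V" and V: "subspace V" and B: "finite B" "V \<subseteq> span B"
    and "x \<in> V" "y \<in> V" "\<And>b. b \<in> B \<Longrightarrow> m x b = m y b"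
  shows "x = y"
proof (rule nondegenerate_on_eqI[OF nondeg V assms(5,6)])
  fix w assume "w \<in> V"
  then obtain u where "w = (\<Sum>b\<in>B. u b *\<^sub>R b)"
    using B span_finite[OF B(1)] by auto
  then show "m x w = m y w" by (simp add: form_sum_right assms(7))
qed

lemma dual_basis_orthogonal_disjoint:
  assumes B: "dual_basis m V B d" and C: "dual_basis m W C e"
    and orth: "\<And>v w. v \<in> V \<Longrightarrow> w \<in> W \<Longrightarrow> m v w = 0"
  shows "B \<inter> C = {}"
proof (rule ccontr)
  assume "B \<inter> C \<noteq> {}"
  then obtain x where "x \<in> B" "x \<in> C" by blast
  then have "d x \<in> V" "x \<in> W" "m x (d x) = 1" using B C unfolding dual_basis_def by auto
  then show False using orth symmetric[of x "d x"] by simp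
qed

lemma dual_basis_orthogonal_union:
  assumes B: "dual_basis m V B d" and C: "dual_basis m W C e"
    and V: "subspace V" and W: "subspace W" and orth: "\<And>v w. v \<in> V \<Longrightarrow> w \<in> W \<Longrightarrow> m v w = 0"
  shows "dual_basis m {v + w |v w. v \<in> V \<and> w \<in> W} (B \<union> C) (\<lambda>x. if x \<in> B then d x else e x)"
    (is "dual_basis m ?U _ ?d")
proof -
  have BV: "B \<subseteq> V" "d ` B \<subseteq> V" "V \<subseteq> span B"
    and CW: "C \<subseteq> W" "e ` C \<subseteq> W" "W \<subseteq> span C"
    and fin: "finite B" "finite C"
    and delta: "\<And>b c. b \<in> B \<Longrightarrow> c \<in> B \<Longrightarrow> m b (d c) = (if b = c then 1 else 0)"
      "\<And>b c. b \<in> C \<Longrightarrow> c \<in> C \<Longrightarrow> m b (e c) = (if b = c then 1 else 0)"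
    using B C unfolding dual_basis_def by auto
  have disjoint: "B \<inter> C = {}" by (rule dual_basis_orthogonal_disjoint[OF B C orth])
  have sum_in_U: "v + w \<in> ?U" if "v \<in> V" "w \<in> W" for v w using that by blast
  have "V \<subseteq> ?U" "W \<subseteq> ?U"
    using sum_in_U[of _ 0] sum_in_U[of 0] subspace_0[OF V] subspace_0[OF W] by auto
  moreover have "?U \<subseteq> span (B \<union> C)"
  proof -
    have "V \<union> W \<subseteq> span (B \<union> C)"
      using BV(3) CW(3) span_mono[of B "B \<union> C"] span_mono[of C "B \<union> C"] by blast
    then show ?thesis by (auto intro: span_add)
  qed
  moreover have "m b (?d c) = (if b = c then 1 else 0)" if b: "b \<in> B \<union> C" and c: "c \<in> B \<union> C" for b c
  proof (cases "c \<in> B")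
    case True
    then have "d c \<in> V" using BV(2) by blast
    then show ?thesis
      using b True delta(1) disjoint orth[of "d c" b] symmetric[of b "d c"] CW(1) by auto
  next
    case False
    with c have "c \<in> C" by blast
    then have "e c \<in> W" using CW(2) by blast
    then show ?thesis
      using b c False \<open>c \<in> C\<close> delta(2) orth[of b "e c"] BV(1) by auto
  qed
  ultimately show ?thesis unfolding dual_basis_def using fin BV(1,2) CW(1,2) by auto
qed

lemma linear_via_form:
  assumes nondeg: "nondegenerate_on m V" and V: "subspace V"
    and R: "\<And>x. R x \<in> V" "\<And>x w. w \<in> V \<Longrightarrow> m (R x) w = \<phi> x w"
    and \<phi>: "\<And>w. w \<in> V \<Longrightarrow> linear (\<lambda>x. \<phi> x w)"
  shows "linear R"
proof (rule linearI)
  show "R (x + y) = R x + R y" for x y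
    by (rule nondegenerate_on_eqI[OF nondeg V]) (simp_all add: R V subspace_add linear_add[OF \<phi>])
  show "R (c *\<^sub>R x) = c *\<^sub>R R x" for c x
    by (rule nondegenerate_on_eqI[OF nondeg V]) (simp_all add: R V subspace_scale linear_scale[OF \<phi>])
qed

context
  fixes V B d
  assumes dual: "dual_basis m V B d"
begin

lemma dual_basis_finite: "finite B"
  and dual_basis_subset: "b \<in> B \<Longrightarrow> b \<in> V"
  and dual_basis_dual_in: "b \<in> B \<Longrightarrow> d b \<in> V"
  and dual_basis_spans: "V \<subseteq> span B"
  and dual_basis_delta: "b \<in> B \<Longrightarrow> c \<in> B \<Longrightarrow> m b (d c) = (if b = c then 1 else 0)"
  using dual unfolding dual_basis_def by auto

lemma dual_basis_coeff:
  assumes "c \<in> B" shows "m (\<Sum>b\<in>B. u b *\<^sub>R b) (d c) = u c"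
proof -
  have "m (\<Sum>b\<in>B. u b *\<^sub>R b) (d c) = (\<Sum>b\<in>B. if b = c then u b else 0)"
    unfolding form_sum_left using assms by (intro sum.cong) (simp_all add: dual_basis_delta)
  then show ?thesis using assms dual_basis_finite by simp
qed

lemma dual_basis_independent: "independent B"
proof
  assume "dependent B"
  then obtain u c where "c \<in> B" "u c \<noteq> 0" "(\<Sum>b\<in>B. u b *\<^sub>R b) = 0"
    using real_vector.dependent_finite[OF dual_basis_finite] by metis
  then show False using dual_basis_coeff[of c u] by simp
qed

lemma dual_basis_span: "subspace V \<Longrightarrow> span B = V"
  using dual_basis_subset dual_basis_spans by (intro real_vector.span_subspace) auto

lemma dual_basis_expansion:
  assumes "v \<in> V" shows "(\<Sum>b\<in>B. m v (d b) *\<^sub>R b) = v"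
proof -
  obtain u where u: "v = (\<Sum>b\<in>B. u b *\<^sub>R b)"
    using assms dual_basis_spans span_finite[OF dual_basis_finite] by auto
  then show ?thesis using dual_basis_coeff by simp
qed

lemma dual_basis_parseval:
  assumes "y \<in> V" shows "(\<Sum>b\<in>B. m x b * m (d b) y) = m x y"
proof -
  have "m x y = m x (\<Sum>b\<in>B. m y (d b) *\<^sub>R b)" using dual_basis_expansion[OF assms] by simp
  also have "\<dots> = (\<Sum>b\<in>B. m x b * m (d b) y)"
    by (simp add: form_sum_right symmetric[of y] mult.commute)
  finally show ?thesis by simp
qed

lemma dual_basis_trace:
  assumes V: "subspace V" and f: "linear f" "\<And>v. v \<in> V \<Longrightarrow> f v \<in> V"
  shows "trace_on V f = (\<Sum>b\<in>B. m (f b) (d b))"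
proof -
  have "trace_on V f = trace_in_basis B f"
    using V f dual_basis_independent dual_basis_span[OF V] by (rule_tac trace_on_eq_trace_in_basis)
  also have "\<dots> = (\<Sum>b\<in>B. m (f b) (d b))"
    unfolding trace_in_basis_def
  proof (rule sum.cong[OF refl])
    fix b assume b: "b \<in> B"
    have "representation B (f b) b = representation B (\<Sum>c\<in>B. m (f b) (d c) *\<^sub>R c) b"
      using dual_basis_expansion f(2) dual_basis_subset[OF b] by simp
    then show "representation B (f b) b = m (f b) (d b)"
      using representation_lincomb_basis[OF dual_basis_independent dual_basis_finite b] by simp
  qed
  finally show ?thesis .
qed

lemma dual_basis_expansion_dual:
  assumes nondeg: "nondegenerate_on m V" and V: "subspace V" and v: "v \<in> V"
  shows "(\<Sum>b\<in>B. m v b *\<^sub>R d b) = v"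
proof (rule nondegenerate_on_eqI[OF nondeg V _ v])
  show "(\<Sum>b\<in>B. m v b *\<^sub>R d b) \<in> V"
    using V dual_basis_dual_in by (intro subspace_sum subspace_scale) auto
  show "m (\<Sum>b\<in>B. m v b *\<^sub>R d b) w = m v w" if "w \<in> V" for w
    using dual_basis_parseval[OF that] by (simp add: form_sum_left)
qed

lemma dual_basis_representer:
  assumes V: "subspace V" and \<phi>: "linear \<phi>"
  shows "(\<Sum>b\<in>B. \<phi> b *\<^sub>R d b) \<in> V"
    and "w \<in> V \<Longrightarrow> m (\<Sum>b\<in>B. \<phi> b *\<^sub>R d b) w = \<phi> w"
proof -
  show "(\<Sum>b\<in>B. \<phi> b *\<^sub>R d b) \<in> V"
    using V dual_basis_dual_in by (intro subspace_sum subspace_scale) auto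
  assume w: "w \<in> V"
  have "\<phi> w = \<phi> (\<Sum>b\<in>B. m w (d b) *\<^sub>R b)" using dual_basis_expansion[OF w] by simp
  also have "\<dots> = (\<Sum>b\<in>B. m w (d b) * \<phi> b)"
    by (simp add: linear_sum[OF \<phi>] linear_scale[OF \<phi>])
  finally show "m (\<Sum>b\<in>B. \<phi> b *\<^sub>R d b) w = \<phi> w"
    by (simp add: form_sum_left symmetric[of "d _" w] mult.commute)
qed

lemma dual_basis_sum_swap:
  fixes \<beta> :: "'a \<Rightarrow> 'a \<Rightarrow> 'b::real_vector"
  assumes \<beta>: "bilinear \<beta>"
  shows "(\<Sum>b\<in>B. \<beta> b (d b)) = (\<Sum>b\<in>B. \<beta> (d b) b)"
proof -
  have lin: "linear (\<lambda>x. \<beta> x y)" "linear (\<beta> x)" for x y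
    using \<beta> by (auto simp: bilinear_def)
  have expand: "d b = (\<Sum>c\<in>B. m (d b) (d c) *\<^sub>R c)" if "b \<in> B" for b
    using dual_basis_expansion[OF dual_basis_dual_in[OF that]] by simp
  have "(\<Sum>b\<in>B. \<beta> b (d b)) = (\<Sum>b\<in>B. \<beta> b (\<Sum>c\<in>B. m (d b) (d c) *\<^sub>R c))"
    using expand by (intro sum.cong) auto
  also have "\<dots> = (\<Sum>b\<in>B. \<Sum>c\<in>B. m (d b) (d c) *\<^sub>R \<beta> b c)"
    by (simp add: linear_sum[OF lin(2)] linear_scale[OF lin(2)])
  also have "\<dots> = (\<Sum>c\<in>B. \<Sum>b\<in>B. m (d c) (d b) *\<^sub>R \<beta> b c)"
    by (subst sum.swap) (simp add: symmetric)
  also have "\<dots> = (\<Sum>c\<in>B. \<beta> (\<Sum>b\<in>B. m (d c) (d b) *\<^sub>R b) c)"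
    by (simp add: linear_sum[OF lin(1)] linear_scale[OF lin(1)])
  also have "\<dots> = (\<Sum>c\<in>B. \<beta> (d c) c)"
    using expand by (intro sum.cong) auto
  finally show ?thesis .
qed

lemma dual_basis_sum_comp_commute:
  assumes A: "linear A" "\<And>v. v \<in> V \<Longrightarrow> A v \<in> V" and C: "linear C" "\<And>v. v \<in> V \<Longrightarrow> C v \<in> V"
  shows "(\<Sum>b\<in>B. m (A (C b)) (d b)) = (\<Sum>b\<in>B. m (C (A b)) (d b))"
proof -
  have apply_expanded: "m (F v) y = (\<Sum>c\<in>B. m v (d c) * m (F c) y)" if "linear F" "v \<in> V" for F v y
  proof -
    have "F v = F (\<Sum>c\<in>B. m v (d c) *\<^sub>R c)" using dual_basis_expansion[OF \<open>v \<in> V\<close>] by simp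
    then show ?thesis by (simp add: linear_sum[OF \<open>linear F\<close>] linear_scale[OF \<open>linear F\<close>] form_sum_left)
  qed
  have "(\<Sum>b\<in>B. m (A (C b)) (d b)) = (\<Sum>b\<in>B. \<Sum>c\<in>B. m (C b) (d c) * m (A c) (d b))"
    using A C dual_basis_subset by (intro sum.cong refl apply_expanded) auto
  also have "\<dots> = (\<Sum>c\<in>B. \<Sum>b\<in>B. m (A c) (d b) * m (C b) (d c))"
    by (subst sum.swap) (intro sum.cong refl mult.commute)
  also have "\<dots> = (\<Sum>c\<in>B. m (C (A c)) (d c))"
    using A C dual_basis_subset by (intro sum.cong refl apply_expanded[symmetric]) auto
  finally show ?thesis .
qed

lemma dual_basis_sum_selfadjoint:
  fixes \<beta> :: "'a \<Rightarrow> 'a \<Rightarrow> 'b::real_vector"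
  assumes nondeg: "nondegenerate_on m V" and V: "subspace V" and \<beta>: "bilinear \<beta>"
    and S: "linear S" "\<And>v. v \<in> V \<Longrightarrow> S v \<in> V"
    and S_selfadjoint: "\<And>x y. x \<in> V \<Longrightarrow> y \<in> V \<Longrightarrow> m (S x) y = m x (S y)"
  shows "(\<Sum>b\<in>B. \<beta> (S b) (d b)) = (\<Sum>b\<in>B. \<beta> b (S (d b)))"
proof -
  have lin: "linear (\<lambda>x. \<beta> x y)" "linear (\<beta> x)" for x y
    using \<beta> by (auto simp: bilinear_def)
  have "(\<Sum>b\<in>B. \<beta> (S b) (d b)) = (\<Sum>b\<in>B. \<beta> (\<Sum>c\<in>B. m (S b) (d c) *\<^sub>R c) (d b))"
    using dual_basis_expansion S(2) dual_basis_subset by (intro sum.cong) auto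
  also have "\<dots> = (\<Sum>b\<in>B. \<Sum>c\<in>B. m (S b) (d c) *\<^sub>R \<beta> c (d b))"
    by (simp add: linear_sum[OF lin(1)] linear_scale[OF lin(1)])
  also have "\<dots> = (\<Sum>c\<in>B. \<Sum>b\<in>B. m (S b) (d c) *\<^sub>R \<beta> c (d b))"
    by (rule sum.swap)
  also have "\<dots> = (\<Sum>c\<in>B. \<beta> c (\<Sum>b\<in>B. m (S b) (d c) *\<^sub>R d b))"
    by (simp add: linear_sum[OF lin(2)] linear_scale[OF lin(2)])
  also have "\<dots> = (\<Sum>c\<in>B. \<beta> c (\<Sum>b\<in>B. m (S (d c)) b *\<^sub>R d b))"
    using S_selfadjoint dual_basis_subset dual_basis_dual_in
    by (intro sum.cong refl arg_cong[where f = "\<beta> _"]) (simp add: symmetric[of _ "S (d _)"])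
  also have "\<dots> = (\<Sum>c\<in>B. \<beta> c (S (d c)))"
    using dual_basis_expansion_dual[OF nondeg V] S(2) dual_basis_dual_in by simp
  finally show ?thesis .
qed

end

lemma dual_basis_exists:
  assumes nondeg: "nondegenerate_on m V" and V: "subspace V"
  obtains B d where "dual_basis m V B d"
proof -
  obtain B where B: "B \<subseteq> V" "independent B" "V \<subseteq> span B"
    using real_vector.basis_exists[of V] by metis
  have fin: "finite B" using B(2) by (rule finiteI_independent)
  have span_B: "span B = V" by (rule real_vector.span_subspace[OF B(1,3) V])
  define T where "T z = (\<Sum>b\<in>B. m z b *\<^sub>R b)" for z
  have T_coord: "representation B (T z) b = m z b" if "b \<in> B" for z b
    unfolding T_def by (rule representation_lincomb_basis[OF B(2) fin that])
  have T: "linear T"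
    by (rule linearI) (simp_all add: T_def scaleR_add_left sum.distrib scaleR_sum_right)
  have "T z \<in> span B" for z unfolding T_def by (intro span_sum span_scale span_base)
  then have T_V: "T ` V \<subseteq> V" using span_B by auto
  have "inj_on T V"
  proof (rule inj_onI)
    fix x y assume "x \<in> V" "y \<in> V" "T x = T y"
    then show "x = y"
      using T_coord by (intro nondegenerate_on_eq_spanning_setI[OF nondeg V fin B(3)]) metis+
  qed
  then have T_onto: "T ` V = V" by (rule linear_inj_on_image_eq[OF T V T_V])
  define d where "d c = (SOME z. z \<in> V \<and> T z = c)" for c
  have d: "d c \<in> V \<and> T (d c) = c" if "c \<in> V" for c
  proof -
    have "c \<in> T ` V" using that T_onto by simp
    then have "\<exists>z. z \<in> V \<and> T z = c" by auto
    then show ?thesis unfolding d_def by (rule someI_ex)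
  qed
  have "m b (d c) = (if b = c then 1 else 0)" if "b \<in> B" "c \<in> B" for b c
  proof -
    have "m b (d c) = representation B (T (d c)) b"
      using T_coord[OF that(1), of "d c"] symmetric[of b "d c"] by simp
    also have "\<dots> = (if b = c then 1 else 0)"
      using that B(1) d[of c] by (auto simp: real_vector.representation_basis[OF B(2)])
    finally show ?thesis .
  qed
  then have "dual_basis m V B d" using fin B d unfolding dual_basis_def by auto
  then show ?thesis by (rule that)
qed

end

section \<open>The Levi-Civita connection of a metric Lie algebra\<close>

locale metric_lie_algebra = symmetric_bilinear_form m for m :: "'a::euclidean_space \<Rightarrow> 'a \<Rightarrow> real" +
  fixes br :: "'a \<Rightarrow> 'a \<Rightarrow> 'a"
  assumes bilinear_bracket: "bilinear br" and bracket_antisym: "br x y = - br y x"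
    and jacobi: "br x (br y z) + br y (br z x) + br z (br x y) = 0"
begin

lemma linear_bracket_left: "linear (\<lambda>x. br x y)" and linear_bracket_right: "linear (br x)"
  using bilinear_bracket by (simp_all add: bilinear_def)

lemmas bracket_simps [simp] =
  bilinear_ladd[OF bilinear_bracket] bilinear_radd[OF bilinear_bracket]
  bilinear_lsub[OF bilinear_bracket] bilinear_rsub[OF bilinear_bracket]
  bilinear_lmul[OF bilinear_bracket] bilinear_rmul[OF bilinear_bracket]
  bilinear_lneg[OF bilinear_bracket] bilinear_rneg[OF bilinear_bracket]
  bilinear_lzero[OF bilinear_bracket] bilinear_rzero[OF bilinear_bracket]

context
  fixes V assumes nondeg: "nondegenerate_on m V" and V: "subspace V"
begin

lemma lc_conn_eqI:
  assumes "z \<in> V" "\<And>w. w \<in> V \<Longrightarrow> 2 * m z w = m (br x y) w - m (br y w) x + m (br w x) y"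
  shows "lc_conn V br m x y = z"
  unfolding lc_conn_def
proof (rule the_equality)
  fix z' assume z': "z' \<in> V \<and> (\<forall>w\<in>V. 2 * m z' w = m (br x y) w - m (br y w) x + m (br w x) y)"
  show "z' = z"
  proof (rule nondegenerate_on_eqI[OF nondeg V])
    show "m z' w = m z w" if "w \<in> V" for w
      using z' assms(2)[OF that] that by auto
  qed (use z' assms in auto)
qed (use assms in blast)

lemma lc_conn_in: "lc_conn V br m x y \<in> V"
  and lc_conn_koszul:
    "w \<in> V \<Longrightarrow> 2 * m (lc_conn V br m x y) w = m (br x y) w - m (br y w) x + m (br w x) y"
proof -
  obtain B d where dual: "dual_basis m V B d" using dual_basis_exists[OF nondeg V] .
  define \<phi> where "\<phi> w = (m (br x y) w - m (br y w) x + m (br w x) y) / 2" for w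
  have "linear \<phi>" by (rule linearI) (simp_all add: \<phi>_def field_simps)
  then obtain z where z: "z \<in> V" and z_represents: "\<And>w. w \<in> V \<Longrightarrow> m z w = \<phi> w"
    using dual_basis_representer[OF dual V] by blast
  have koszul: "2 * m z w = m (br x y) w - m (br y w) x + m (br w x) y" if "w \<in> V" for w
    using z_represents[OF that] unfolding \<phi>_def by (simp add: field_simps)
  have "lc_conn V br m x y = z" using z koszul by (rule lc_conn_eqI)
  then show "lc_conn V br m x y \<in> V"
    and "w \<in> V \<Longrightarrow> 2 * m (lc_conn V br m x y) w = m (br x y) w - m (br y w) x + m (br w x) y"
    using z koszul by simp_all
qed

lemma linear_lc_conn_left: "linear (\<lambda>x. lc_conn V br m x y)"
  by (rule linear_via_form[OF nondeg V lc_conn_in,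
        where \<phi> = "\<lambda>x w. (m (br x y) w - m (br y w) x + m (br w x) y) / 2"])
    (simp_all add: lc_conn_koszul linearI field_simps)

lemma linear_lc_conn_right: "linear (lc_conn V br m x)"
  by (rule linear_via_form[OF nondeg V lc_conn_in,
        where \<phi> = "\<lambda>y w. (m (br x y) w - m (br y w) x + m (br w x) y) / 2"])
    (simp_all add: lc_conn_koszul linearI field_simps)

lemma linear_curv_1: "linear (\<lambda>z. curv V br m z x y)"
proof -
  have "linear (\<lambda>z. lc_conn V br m x (lc_conn V br m z y))" "linear (\<lambda>z. lc_conn V br m (br z x) y)"
    using linear_compose[OF linear_lc_conn_left linear_lc_conn_right]
      linear_compose[OF linear_bracket_left linear_lc_conn_left]
    by (simp_all add: o_def)
  then show ?thesis unfolding curv_def by (intro linear_compose_sub linear_lc_conn_left)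
qed

lemma linear_curv_2: "linear (\<lambda>x. curv V br m z x y)"
proof -
  have "linear (\<lambda>x. lc_conn V br m z (lc_conn V br m x y))" "linear (\<lambda>x. lc_conn V br m (br z x) y)"
    using linear_compose[OF linear_lc_conn_left linear_lc_conn_right]
      linear_compose[OF linear_bracket_right linear_lc_conn_left]
    by (simp_all add: o_def)
  then show ?thesis unfolding curv_def by (intro linear_compose_sub linear_lc_conn_left)
qed

lemma linear_curv_3: "linear (\<lambda>y. curv V br m z x y)"
proof -
  have "linear (\<lambda>y. lc_conn V br m u (lc_conn V br m v y))" for u v
    using linear_compose[OF linear_lc_conn_right linear_lc_conn_right] by (simp add: o_def)
  then show ?thesis unfolding curv_def by (intro linear_compose_sub linear_lc_conn_right)
qed

lemma curv_in: "curv V br m z x y \<in> V"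
  unfolding curv_def using lc_conn_in V by (intro subspace_diff) auto

lemma ricci_tensor_dual_basis:
  assumes "dual_basis m V B d"
  shows "ricci_tensor V br m x y = (\<Sum>b\<in>B. m (curv V br m b x y) (d b))"
  unfolding ricci_tensor_def by (rule dual_basis_trace[OF assms V linear_curv_1 curv_in])

lemma linear_ricci_tensor_left: "linear (\<lambda>x. ricci_tensor V br m x y)"
  and linear_ricci_tensor_right: "linear (\<lambda>y. ricci_tensor V br m x y)"
proof -
  obtain B d where dual: "dual_basis m V B d" using dual_basis_exists[OF nondeg V] .
  have "linear (\<lambda>u. m (curv V br m b u y) (d b))" "linear (\<lambda>v. m (curv V br m b x v) (d b))" for b
    using linear_compose[OF linear_curv_2 linear_form_left] linear_compose[OF linear_curv_3 linear_form_left]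
    by (simp_all add: o_def)
  then show "linear (\<lambda>x. ricci_tensor V br m x y)" "linear (\<lambda>y. ricci_tensor V br m x y)"
    unfolding ricci_tensor_dual_basis[OF dual] by (simp_all add: linear_compose_sum)
qed

lemma ricci_op_eq_iff:
  assumes "r \<in> V"
  shows "ricci_op V br m x = r \<longleftrightarrow> (\<forall>y\<in>V. m r y = ricci_tensor V br m x y)"
proof -
  obtain B d where dual: "dual_basis m V B d" using dual_basis_exists[OF nondeg V] .
  define r0 where "r0 = (\<Sum>b\<in>B. ricci_tensor V br m x b *\<^sub>R d b)"
  have r0: "r0 \<in> V" "\<forall>y\<in>V. m r0 y = ricci_tensor V br m x y"
    using dual_basis_representer[OF dual V linear_ricci_tensor_right] unfolding r0_def by auto
  have unique: "r1 = r0" if "r1 \<in> V" "\<forall>y\<in>V. m r1 y = ricci_tensor V br m x y" for r1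
    using that r0 by (intro nondegenerate_on_eqI[OF nondeg V]) auto
  have "ricci_op V br m x = r0"
    unfolding ricci_op_def by (rule the_equality) (use r0 unique in blast)+
  then show ?thesis using unique[OF assms] r0 by blast
qed

lemma ricci_op_eq_scale_iff:
  "(\<forall>x\<in>V. ricci_op V br m x = c *\<^sub>R x) \<longleftrightarrow> (\<forall>x\<in>V. \<forall>y\<in>V. ricci_tensor V br m x y = c * m x y)"
  using ricci_op_eq_iff[OF subspace_scale[OF V]] by (auto simp: eq_commute)

end

end

section \<open>Pseudo-Iwasawa decompositions\<close>

locale pseudo_iwasawa_algebra = metric_lie_algebra m br
  for m :: "'a::euclidean_space \<Rightarrow> 'a \<Rightarrow> real" and br +
  fixes g a :: "'a set"
  assumes nondegenerate: "(\<forall>y. m x y = 0) \<Longrightarrow> x = 0"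
    and subspace_g: "subspace g" and subspace_a: "subspace a"
    and ideal_g: "y \<in> g \<Longrightarrow> br x y \<in> g"
    and nilpotent_g: "nilpotent_on g br"
    and abelian_a: "X \<in> a \<Longrightarrow> Y \<in> a \<Longrightarrow> br X Y = 0"
    and decomposition: "\<exists>u\<in>g. \<exists>X\<in>a. v = u + X"
    and orthogonal: "u \<in> g \<Longrightarrow> X \<in> a \<Longrightarrow> m u X = 0"
    and ad_a_selfadjoint: "X \<in> a \<Longrightarrow> m (br X u) v = m u (br X v)"
begin

lemma orthogonal_a_g: "X \<in> a \<Longrightarrow> u \<in> g \<Longrightarrow> m X u = 0"
  using orthogonal symmetric by metis

lemma nondegenerate_on_UNIV: "nondegenerate_on m UNIV"
  unfolding nondegenerate_on_def using nondegenerate by blast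

lemma nondegenerate_on_g: "nondegenerate_on m g"
  unfolding nondegenerate_on_def
proof (intro ballI impI)
  fix u assume u: "u \<in> g" and "\<forall>w\<in>g. m u w = 0"
  then have "m u v = 0" for v
    using decomposition[of v] orthogonal[OF u] by auto
  then show "u = 0" using nondegenerate by blast
qed

lemma nondegenerate_on_a: "nondegenerate_on m a"
  unfolding nondegenerate_on_def
proof (intro ballI impI)
  fix X assume X: "X \<in> a" and "\<forall>Y\<in>a. m X Y = 0"
  then have "m X v = 0" for v
    using decomposition[of v] orthogonal_a_g[OF X] by auto
  then show "X = 0" using nondegenerate by blast
qed

lemma bracket_in_g: "br x y \<in> g"
proof -
  obtain u X where x: "u \<in> g" "X \<in> a" "x = u + X" using decomposition by blast
  obtain v Y where y: "v \<in> g" "Y \<in> a" "y = v + Y" using decomposition by blast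
  have "br x y = br x v - br Y u"
    using x y abelian_a bracket_antisym[of u Y] by simp
  also have "\<dots> \<in> g"
    using ideal_g x(1) y(1) by (intro subspace_diff[OF subspace_g]) auto
  finally show ?thesis .
qed

lemma in_a_if_orthogonal_g:
  assumes "\<And>w. w \<in> g \<Longrightarrow> m x w = 0" shows "x \<in> a"
proof -
  obtain u X where u: "u \<in> g" "X \<in> a" "x = u + X" using decomposition by blast
  have "\<forall>w\<in>g. m u w = 0" using assms u orthogonal_a_g by auto
  then have "u = 0" using nondegenerate_on_g u unfolding nondegenerate_on_def by blast
  then show ?thesis using u by simp
qed

lemma lower_central_subset: "lower_central g br i \<subseteq> g"
proof (induction i)
  case (Suc i)
  have "{br x y |x y. x \<in> g \<and> y \<in> lower_central g br i} \<subseteq> g" using ideal_g Suc by auto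
  then show ?case using subspace_g by (simp add: span_minimal)
qed simp

lemma bracket_lower_central_Suc:
  "w \<in> g \<Longrightarrow> y \<in> lower_central g br i \<Longrightarrow> br w y \<in> lower_central g br (Suc i)"
  by (auto intro: span_base)

lemma bracket_lower_central: "y \<in> lower_central g br i \<Longrightarrow> br x y \<in> lower_central g br i"
proof (induction i arbitrary: y)
  case 0 then show ?case using ideal_g by simp
next
  case (Suc i)
  let ?S = "{br u v |u v. u \<in> g \<and> v \<in> lower_central g br i}"
  have "br x y \<in> span ?S" if "y \<in> span ?S" for y
    using that
  proof (induction rule: span_induct)
    case base
    show ?case unfolding subspace_def by (auto intro: span_add span_scale span_zero)
  next
    case (step z)
    then obtain u v where uv: "u \<in> g" "v \<in> lower_central g br i" "z = br u v" by blast
    have "br x (br u v) = br (br x u) v + br u (br x v)"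
      using jacobi[of x u v] bracket_antisym[of v x] bracket_antisym[of "br x u" v]
        bracket_antisym[of u "br v x"]
      by (simp add: algebra_simps)
    moreover have "br (br x u) v \<in> ?S" "br u (br x v) \<in> ?S"
      using bracket_in_g uv Suc.IH by blast+
    ultimately show ?case using uv by (auto intro: span_add span_base)
  qed
  then show ?case using Suc.prems by simp
qed

lemma trace_on_g_lowering:
  assumes f: "linear f" and lowers: "\<And>i y. y \<in> lower_central g br i \<Longrightarrow> f y \<in> lower_central g br (Suc i)"
  shows "trace_on g f = 0"
proof -
  obtain k where k: "lower_central g br k = {0}" using nilpotent_g unfolding nilpotent_on_def by blast
  have f_g: "f v \<in> g" if "v \<in> g" for v
    using lowers[of v 0] that lower_central_subset[of 1] by auto
  have "(f ^^ j) y \<in> lower_central g br j" if "y \<in> g" for j y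
    by (induction j) (use that lowers in auto)
  then show ?thesis
    using k by (intro trace_on_nilpotent[OF subspace_g f f_g, of k]) auto
qed

abbreviation lc :: "'a \<Rightarrow> 'a \<Rightarrow> 'a" where "lc \<equiv> lc_conn UNIV br m"
abbreviation lc_g :: "'a \<Rightarrow> 'a \<Rightarrow> 'a" where "lc_g \<equiv> lc_conn g br m"

lemma lc_koszul: "2 * m (lc x y) w = m (br x y) w - m (br y w) x + m (br w x) y"
  using lc_conn_koszul[OF nondegenerate_on_UNIV subspace_UNIV] by simp

lemma lc_g_koszul: "w \<in> g \<Longrightarrow> 2 * m (lc_g x y) w = m (br x y) w - m (br y w) x + m (br w x) y"
  using lc_conn_koszul[OF nondegenerate_on_g subspace_g] .

lemma lc_g_in: "lc_g x y \<in> g"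
  using lc_conn_in[OF nondegenerate_on_g subspace_g] .

lemma linear_lc_right: "linear (lc x)"
  using linear_lc_conn_right[OF nondegenerate_on_UNIV subspace_UNIV] .

lemma lc_zero_right [simp]: "lc x 0 = 0"
  using linear_0[OF linear_lc_right] .

lemma lc_add_right: "lc x (y + z) = lc x y + lc x z"
  using linear_add[OF linear_lc_right] .

lemma lc_zero_left [simp]: "lc 0 y = 0"
  using linear_0[OF linear_lc_conn_left[OF nondegenerate_on_UNIV subspace_UNIV]] .

lemma linear_lc_g_right: "linear (lc_g x)"
  using linear_lc_conn_right[OF nondegenerate_on_g subspace_g] .

lemma ad_a_skew: "X \<in> a \<Longrightarrow> m (br y X) x = - m (br X x) y"
  using bracket_antisym[of y X] ad_a_selfadjoint[of X y x] symmetric[of y "br X x"] by simp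

lemma lc_a_left: assumes "X \<in> a" shows "lc X y = 0"
proof -
  have "m (lc X y) v = 0" for v
    using lc_koszul[of X y v] orthogonal[OF bracket_in_g assms] ad_a_skew[OF assms, of v y] by simp
  then show ?thesis using nondegenerate by blast
qed

lemma lc_a_right: assumes "Y \<in> a" shows "lc x Y = br x Y"
proof -
  have "m (lc x Y - br x Y) v = 0" for v
    using lc_koszul[of x Y v] orthogonal[OF bracket_in_g assms] ad_a_skew[OF assms, of x v] by simp
  then show ?thesis using nondegenerate[of "lc x Y - br x Y"] by simp
qed

lemma lc_g_component: "w \<in> g \<Longrightarrow> m (lc x y) w = m (lc_g x y) w"
  using lc_koszul[of x y w] lc_g_koszul[of w x y] by simp

lemma lc_a_component: assumes "X \<in> a" shows "m (lc x y) X = m (br X x) y"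
  using lc_koszul[of x y X] orthogonal[OF bracket_in_g assms] ad_a_skew[OF assms, of y x] by simp

lemma lc_g_skew:
  assumes "v \<in> g" "w \<in> g" shows "m (lc_g x v) w = - m v (lc_g x w)"
  using lc_g_koszul[OF assms(2), of x v] lc_g_koszul[OF assms(1), of x w]
    bracket_antisym[of x w] bracket_antisym[of w v] bracket_antisym[of v x] symmetric[of v "lc_g x w"]
  by simp

text \<open>For \<open>u v \<in> g\<close> this is the a-component \<open>A(u,v)\<close> of \<open>lc u v\<close>; the g-component is
  \<open>lc_g u v\<close> by \<open>lc_g_component\<close>.\<close>

definition lc_a_part :: "'a \<Rightarrow> 'a \<Rightarrow> 'a" where
  "lc_a_part x y = lc x y - lc_g x y"

lemma lc_a_part_in_a: "lc_a_part x y \<in> a"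
  unfolding lc_a_part_def by (rule in_a_if_orthogonal_g) (simp add: lc_g_component)

lemma lc_eq_lc_g_plus_a_part: "lc x y = lc_g x y + lc_a_part x y"
  by (simp add: lc_a_part_def)

lemma lc_a_part_component: "X \<in> a \<Longrightarrow> m (lc_a_part x y) X = m (br X x) y"
  unfolding lc_a_part_def using lc_a_component orthogonal[OF lc_g_in] by simp

lemma curv_UNIV: "curv UNIV br m z x y = lc z (lc x y) - lc x (lc z y) - lc (br z x) y"
  by (simp add: curv_def)

end

section \<open>The Ricci tensor in a basis adapted to the decomposition\<close>

locale pseudo_iwasawa_dual_bases = pseudo_iwasawa_algebra m br g a
  for m :: "'a::euclidean_space \<Rightarrow> 'a \<Rightarrow> real" and br g a +
  fixes E F :: "'a set" and de df :: "'a \<Rightarrow> 'a"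
  assumes dual_E: "dual_basis m g E de" and dual_F: "dual_basis m a F df"
begin

lemma de_in_g: "e \<in> E \<Longrightarrow> de e \<in> g"
  and F_in_a: "f \<in> F \<Longrightarrow> f \<in> a" and df_in_a: "f \<in> F \<Longrightarrow> df f \<in> a"
  using dual_basis_dual_in[OF dual_E] dual_basis_subset[OF dual_F] dual_basis_dual_in[OF dual_F] by auto

lemma trace_on_UNIV_split:
  assumes "linear \<phi>"
  shows "trace_on UNIV \<phi> = (\<Sum>e\<in>E. m (\<phi> e) (de e)) + (\<Sum>f\<in>F. m (\<phi> f) (df f))"
proof -
  have "{u + X |u X. u \<in> g \<and> X \<in> a} = UNIV" using decomposition by blast
  note union = dual_basis_orthogonal_union[OF dual_E dual_F subspace_g subspace_a orthogonal,
      unfolded this] dual_basis_orthogonal_disjoint[OF dual_E dual_F orthogonal]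
  have "trace_on UNIV \<phi> = (\<Sum>x\<in>E \<union> F. m (\<phi> x) (if x \<in> E then de x else df x))"
    using dual_basis_trace[OF union(1) subspace_UNIV assms] by simp
  also have "\<dots> = (\<Sum>x\<in>E. m (\<phi> x) (if x \<in> E then de x else df x))
      + (\<Sum>x\<in>F. m (\<phi> x) (if x \<in> E then de x else df x))"
    using dual_basis_finite[OF dual_E] dual_basis_finite[OF dual_F] union(2)
    by (rule sum.union_disjoint)
  also have "\<dots> = (\<Sum>e\<in>E. m (\<phi> e) (de e)) + (\<Sum>f\<in>F. m (\<phi> f) (df f))"
    using union(2) by (auto intro!: arg_cong2[where f = "(+)"] sum.cong)
  finally show ?thesis .
qed

lemma trace_on_g_dual_basis:
  "linear \<phi> \<Longrightarrow> (\<And>v. v \<in> g \<Longrightarrow> \<phi> v \<in> g) \<Longrightarrow> trace_on g \<phi> = (\<Sum>e\<in>E. m (\<phi> e) (de e))"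
  by (rule dual_basis_trace[OF dual_E subspace_g])

lemma sum_E_lowering_eq_0:
  assumes f: "linear f" and lowers: "\<And>i y. y \<in> lower_central g br i \<Longrightarrow> f y \<in> lower_central g br (Suc i)"
  shows "(\<Sum>e\<in>E. m (f e) (de e)) = 0"
proof -
  have "f v \<in> g" if "v \<in> g" for v
    using lowers[of v 0] that lower_central_subset[of 1] by auto
  then show ?thesis using trace_on_g_dual_basis[OF f] trace_on_g_lowering[OF f lowers] by simp
qed

lemma sum_E_ad_g_eq_0: "w \<in> g \<Longrightarrow> (\<Sum>e\<in>E. m (br w e) (de e)) = 0"
  by (rule sum_E_lowering_eq_0[OF linear_bracket_right bracket_lower_central_Suc])

lemma mean_curvature_in_a:
  assumes H: "\<And>v. m H v = trace_on UNIV (br v)"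
  shows "H \<in> a"
proof (rule in_a_if_orthogonal_g)
  fix w assume w: "w \<in> g"
  have "(\<Sum>f\<in>F. m (br w f) (df f)) = 0"
    using orthogonal[OF bracket_in_g df_in_a] by simp
  then show "m H w = 0"
    using H[of w] trace_on_UNIV_split[OF linear_bracket_right] sum_E_ad_g_eq_0[OF w] by simp
qed

lemma ricci_a_a:
  assumes X: "X \<in> a" and Y: "Y \<in> a"
  shows "ricci_tensor UNIV br m X Y = - trace_on UNIV (br X \<circ> br Y)"
proof -
  have "br X (br Y z) = br (br z X) Y" for z
    using jacobi[of X Y z] abelian_a[OF X Y] bracket_antisym[of Y "br z X"] by simp
  then have curv: "curv UNIV br m z X Y = - br X (br Y z)" for z
    unfolding curv_UNIV using lc_a_left[OF X] lc_a_right[OF Y] abelian_a[OF X Y] by simp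
  have lin: "linear (br X \<circ> br Y)"
    by (rule linear_compose[OF linear_bracket_right linear_bracket_right])
  then have "linear (\<lambda>z. - br X (br Y z))"
    using linear_compose_neg by (simp add: o_def)
  then show ?thesis unfolding ricci_tensor_def curv
    using trace_on_UNIV_split[OF lin] trace_on_UNIV_split by (simp add: sum_negf)
qed

lemma sum_E_ad_ad_g_eq_0:
  assumes u: "u \<in> g"
  shows "(\<Sum>e\<in>E. m (br Y (br u e)) (de e)) = 0"
proof (rule sum_E_lowering_eq_0)
  show "linear (\<lambda>e. br Y (br u e))"
    using linear_compose[OF linear_bracket_right linear_bracket_right] by (simp add: o_def)
  show "br Y (br u y) \<in> lower_central g br (Suc i)" if "y \<in> lower_central g br i" for i y
    by (rule bracket_lower_central[OF bracket_lower_central_Suc[OF u that]])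
qed

lemma sum_E_lc_left_eq_0:
  assumes w: "w \<in> g"
  shows "(\<Sum>e\<in>E. m (lc e w) (de e)) = 0"
proof -
  have bil: "bilinear (\<lambda>x y. m (br w y) x)" "bilinear (\<lambda>x y. m (br x y) w)"
    by (unfold bilinear_def, intro allI conjI linearI; simp)+
  have "(\<Sum>e\<in>E. 2 * m (lc e w) (de e)) =
      (\<Sum>e\<in>E. m (br e w) (de e)) - (\<Sum>e\<in>E. m (br w (de e)) e) + (\<Sum>e\<in>E. m (br (de e) e) w)"
    by (simp add: lc_koszul sum.distrib sum_subtractf)
  moreover have "(\<Sum>e\<in>E. m (br e w) (de e)) = 0"
    using sum_E_ad_g_eq_0[OF w] bracket_antisym[of _ w] by (simp add: sum_negf)
  moreover have "(\<Sum>e\<in>E. m (br w (de e)) e) = 0"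
    using dual_basis_sum_swap[OF dual_E bil(1)] sum_E_ad_g_eq_0[OF w] by simp
  moreover have "(\<Sum>e\<in>E. m (br e (de e)) w) = - (\<Sum>e\<in>E. m (br (de e) e) w)"
    using bracket_antisym[of _ "de _"] by (simp add: sum_negf)
  then have "(\<Sum>e\<in>E. m (br (de e) e) w) = 0"
    using dual_basis_sum_swap[OF dual_E bil(2)] by simp
  ultimately show ?thesis by (simp add: sum_distrib_left[symmetric])
qed

lemma sum_E_lc_bracket_eq_0:
  assumes u: "u \<in> g" and Y: "Y \<in> a"
  shows "(\<Sum>e\<in>E. m (lc u (br e Y)) (de e)) = 0"
proof -
  define T where "T = (\<Sum>e\<in>E. m (br Y (lc_g u e)) (de e))"
  have "bilinear (\<lambda>x y. m x (br Y (lc_g u y)))"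
    by (unfold bilinear_def, intro allI conjI linearI;
        simp add: linear_add[OF linear_lc_g_right] linear_scale[OF linear_lc_g_right])
  then have swap: "(\<Sum>e\<in>E. m e (br Y (lc_g u (de e)))) = T"
    unfolding T_def using dual_basis_sum_swap[OF dual_E] by (simp add: symmetric)
  have "m (lc u (br e Y)) (de e) = m e (br Y (lc_g u (de e)))" if e: "e \<in> E" for e
  proof -
    have "m (lc u (br e Y)) (de e) = - m (br e Y) (lc_g u (de e))"
      using lc_g_component[OF de_in_g[OF e]] lc_g_skew[OF bracket_in_g de_in_g[OF e]] by simp
    also have "\<dots> = m e (br Y (lc_g u (de e)))"
      using bracket_antisym[of e Y] ad_a_selfadjoint[OF Y] by simp
    finally show ?thesis .
  qed
  then have lhs: "(\<Sum>e\<in>E. m (lc u (br e Y)) (de e)) = T" using swap by simp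
  have "T = (\<Sum>e\<in>E. m (lc_g u (br Y e)) (de e))"
    unfolding T_def
    by (rule dual_basis_sum_comp_commute[OF dual_E linear_bracket_right _ linear_lc_g_right])
      (simp_all add: ideal_g lc_g_in)
  also have "\<dots> = - (\<Sum>e\<in>E. m e (br Y (lc_g u (de e))))"
    using lc_g_skew[OF bracket_in_g de_in_g] ad_a_selfadjoint[OF Y] by (simp add: sum_negf)
  finally have "T = 0" using swap by simp
  then show ?thesis using lhs by simp
qed

lemma ricci_g_a:
  assumes u: "u \<in> g" and Y: "Y \<in> a"
  shows "ricci_tensor UNIV br m u Y = 0"
proof -
  have curv: "curv UNIV br m z u Y = lc z (br u Y) - lc u (br z Y) - br (br z u) Y" for z
    unfolding curv_UNIV using lc_a_right[OF Y] by simp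
  have "(\<Sum>f\<in>F. m (curv UNIV br m f u Y) (df f)) = 0"
    unfolding curv using lc_a_left[OF F_in_a] abelian_a[OF F_in_a Y] orthogonal[OF bracket_in_g df_in_a]
    by simp
  moreover have "(\<Sum>e\<in>E. m (br (br e u) Y) (de e)) = 0"
    using sum_E_ad_ad_g_eq_0[OF u, of Y] bracket_antisym[of "br _ u" Y] bracket_antisym[of _ u]
    by simp
  ultimately show ?thesis
    unfolding ricci_tensor_def trace_on_UNIV_split[OF linear_curv_1[OF nondegenerate_on_UNIV subspace_UNIV]]
    using sum_E_lc_left_eq_0[OF bracket_in_g] sum_E_lc_bracket_eq_0[OF u Y]
    by (simp add: curv sum_subtractf)
qed

lemma sum_E_bracket_dual_ad_a_eq_0:
  assumes Y: "Y \<in> a"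
  shows "(\<Sum>e\<in>E. br (de e) (br Y e)) = 0"
proof -
  have bil: "bilinear (\<lambda>x y. br y x)" "bilinear (\<lambda>x y. br (br Y y) x)"
    by (unfold bilinear_def, intro allI conjI linearI; simp)+
  have "(\<Sum>e\<in>E. br (de e) (br Y e)) = (\<Sum>e\<in>E. br (br Y (de e)) e)"
    using dual_basis_sum_selfadjoint[OF dual_E nondegenerate_on_g subspace_g bil(1)
        linear_bracket_right ideal_g ad_a_selfadjoint[OF Y]] .
  also have "\<dots> = (\<Sum>e\<in>E. br (br Y e) (de e))"
    using dual_basis_sum_swap[OF dual_E bil(2)] .
  also have "\<dots> = - (\<Sum>e\<in>E. br (de e) (br Y e))"
    using bracket_antisym[of "br Y _"] by (simp add: sum_negf)
  finally have "2 *\<^sub>R (\<Sum>e\<in>E. br (de e) (br Y e)) = 0"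
    by (simp only: scaleR_2 eq_neg_iff_add_eq_0)
  then show ?thesis by simp
qed

lemma ricci_a_g:
  assumes u: "u \<in> g" and Y: "Y \<in> a"
  shows "ricci_tensor UNIV br m Y u = 0"
proof -
  have curv: "curv UNIV br m z Y u = - lc (br z Y) u" for z
    unfolding curv_UNIV using lc_a_left[OF Y] by simp
  have bil: "bilinear (\<lambda>x y. m (br Y (br u y)) x)"
    by (unfold bilinear_def, intro allI conjI linearI; simp)
  have koszul: "2 * m (curv UNIV br m e Y u) (de e) =
      - m (br (br e Y) u) (de e) - m (br u (de e)) (br Y e) + m (br (de e) (br Y e)) u" for e
    unfolding curv using lc_koszul[of "br e Y" u "de e"] bracket_antisym[of e Y] by simp
  have "(\<Sum>e\<in>E. m (br (br e Y) u) (de e)) = 0"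
    using sum_E_lowering_eq_0[of "\<lambda>e. br u (br Y e)"]
      linear_compose[OF linear_bracket_right linear_bracket_right]
      bracket_lower_central_Suc[OF u bracket_lower_central]
      bracket_antisym[of "br _ Y" u] bracket_antisym[of _ Y]
    by (simp add: o_def)
  moreover have "(\<Sum>e\<in>E. m (br u (de e)) (br Y e)) = 0"
    using dual_basis_sum_swap[OF dual_E bil] sum_E_ad_ad_g_eq_0[OF u, of Y]
      ad_a_selfadjoint[OF Y] symmetric[of "br u _" "br Y _"] by simp
  moreover have "(\<Sum>e\<in>E. m (br (de e) (br Y e)) u) = 0"
    using sum_E_bracket_dual_ad_a_eq_0[OF Y] form_sum_left[of "\<lambda>e. br (de e) (br Y e)" E u] by simp
  ultimately have "(\<Sum>e\<in>E. 2 * m (curv UNIV br m e Y u) (de e)) = 0"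
    unfolding koszul by (simp add: sum.distrib sum_subtractf sum_negf)
  moreover have "(\<Sum>f\<in>F. m (curv UNIV br m f Y u) (df f)) = 0"
    unfolding curv using abelian_a[OF F_in_a Y] by simp
  ultimately show ?thesis
    unfolding ricci_tensor_def trace_on_UNIV_split[OF linear_curv_1[OF nondegenerate_on_UNIV subspace_UNIV]]
    by (simp add: sum_distrib_left[symmetric])
qed

lemma lc_a_part_expansion: "lc_a_part x y = (\<Sum>f\<in>F. m (br (df f) x) y *\<^sub>R f)"
  using dual_basis_expansion[OF dual_F lc_a_part_in_a] lc_a_part_component[OF df_in_a] by simp

lemma curv_UNIV_g_dual_component:
  assumes e: "e \<in> E"
  shows "m (curv UNIV br m e u v) (de e) = m (curv g br m e u v) (de e)
    + m (br e (lc_a_part u v)) (de e) - m (br u (lc_a_part e v)) (de e)"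
proof -
  have "lc x (lc y v) = lc x (lc_g y v) + br x (lc_a_part y v)" for x y
    by (subst lc_eq_lc_g_plus_a_part) (simp add: lc_add_right lc_a_right[OF lc_a_part_in_a])
  then have "m (curv UNIV br m e u v) (de e) = m (lc e (lc_g u v)) (de e) + m (br e (lc_a_part u v)) (de e)
      - m (lc u (lc_g e v)) (de e) - m (br u (lc_a_part e v)) (de e) - m (lc (br e u) v) (de e)"
    unfolding curv_UNIV by simp
  then show ?thesis
    unfolding curv_def using lc_g_component[OF de_in_g[OF e]] by simp
qed

lemma sum_E_bracket_a_part:
  assumes H: "\<And>v. m H v = trace_on UNIV (br v)"
  shows "(\<Sum>e\<in>E. m (br e (lc_a_part u v)) (de e)) = - m (br H u) v"
proof -
  let ?A = "lc_a_part u v"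
  have "(\<Sum>e\<in>E. m (br e ?A) (de e)) = - (\<Sum>e\<in>E. m (br ?A e) (de e))"
    using bracket_antisym[of _ ?A] by (simp add: sum_negf)
  also have "(\<Sum>e\<in>E. m (br ?A e) (de e)) = trace_on UNIV (br ?A)"
    using trace_on_UNIV_split[OF linear_bracket_right, of ?A]
      abelian_a[OF lc_a_part_in_a F_in_a] by simp
  also have "\<dots> = m ?A H" using H[of ?A] symmetric[of H] by simp
  also have "\<dots> = m (br H u) v" using lc_a_part_component[OF mean_curvature_in_a[OF H]] .
  finally show ?thesis .
qed

lemma sum_E_bracket_g_a_part:
  assumes u: "u \<in> g"
  shows "(\<Sum>e\<in>E. m (br u (lc_a_part e v)) (de e)) = - (\<Sum>f\<in>F. m (br (df f) (br f u)) v)"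
proof -
  have "m (br u (lc_a_part e v)) (de e) = - (\<Sum>f\<in>F. m (br (df f) v) e * m (de e) (br f u))"
    if e: "e \<in> E" for e
  proof -
    have "m (br u (lc_a_part e v)) (de e) = - m u (br (lc_a_part e v) (de e))"
      using bracket_antisym[of u] ad_a_selfadjoint[OF lc_a_part_in_a] by simp
    also have "\<dots> = - (\<Sum>f\<in>F. m (br (df f) e) v * m u (br f (de e)))"
      unfolding lc_a_part_expansion
      by (simp add: linear_sum[OF linear_bracket_left] form_sum_right)
    also have "\<dots> = - (\<Sum>f\<in>F. m (br (df f) v) e * m (de e) (br f u))"
      using ad_a_selfadjoint[OF df_in_a] ad_a_selfadjoint[OF F_in_a]
      by (simp add: symmetric[of e] symmetric[of u])
    finally show ?thesis .
  qed
  then have "(\<Sum>e\<in>E. m (br u (lc_a_part e v)) (de e))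
      = - (\<Sum>e\<in>E. \<Sum>f\<in>F. m (br (df f) v) e * m (de e) (br f u))"
    by (simp add: sum_negf)
  also have "(\<Sum>e\<in>E. \<Sum>f\<in>F. m (br (df f) v) e * m (de e) (br f u))
      = (\<Sum>f\<in>F. \<Sum>e\<in>E. m (br (df f) v) e * m (de e) (br f u))"
    by (rule sum.swap)
  also have "\<dots> = (\<Sum>f\<in>F. m (br (df f) v) (br f u))"
    using dual_basis_parseval[OF dual_E ideal_g[OF u]] by simp
  also have "\<dots> = (\<Sum>f\<in>F. m (br (df f) (br f u)) v)"
    by (intro sum.cong refl) (simp add: ad_a_selfadjoint[OF df_in_a] symmetric[of v])
  finally show ?thesis .
qed

lemma sum_F_curv_g_g:
  "(\<Sum>f\<in>F. m (curv UNIV br m f u v) (df f)) = - (\<Sum>f\<in>F. m (br (df f) (br f u)) v)"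
proof -
  have "curv UNIV br m f u v = - lc (br f u) v" if "f \<in> F" for f
    unfolding curv_UNIV using lc_a_left[OF F_in_a[OF that]] by simp
  then show ?thesis using lc_a_component[OF df_in_a] by (simp add: sum_negf)
qed

lemma ricci_g_g:
  assumes u: "u \<in> g" and v: "v \<in> g" and H: "\<And>v. m H v = trace_on UNIV (br v)"
  shows "ricci_tensor UNIV br m u v = ricci_tensor g br m u v - m (br H u) v"
proof -
  have "(\<Sum>e\<in>E. m (curv UNIV br m e u v) (de e)) = ricci_tensor g br m u v
      + (\<Sum>e\<in>E. m (br e (lc_a_part u v)) (de e)) - (\<Sum>e\<in>E. m (br u (lc_a_part e v)) (de e))"
    unfolding ricci_tensor_dual_basis[OF nondegenerate_on_g subspace_g dual_E]
    by (simp add: curv_UNIV_g_dual_component sum.distrib sum_subtractf)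
  \<comment> \<open>the sum over \<open>F\<close> cancels the second correction term; the first one produces \<open>H\<close>\<close>
  then show ?thesis
    unfolding ricci_tensor_def trace_on_UNIV_split[OF linear_curv_1[OF nondegenerate_on_UNIV subspace_UNIV]]
    using sum_E_bracket_a_part[OF H] sum_E_bracket_g_a_part[OF u] sum_F_curv_g_g by simp
qed

lemma ricci_tensor_eq_scale_iff_blocks:
  "(\<forall>x y. ricci_tensor UNIV br m x y = c * m x y) \<longleftrightarrow>
     (\<forall>u\<in>g. \<forall>v\<in>g. ricci_tensor UNIV br m u v = c * m u v) \<and>
     (\<forall>X\<in>a. \<forall>Y\<in>a. ricci_tensor UNIV br m X Y = c * m X Y)"
proof (intro iffI allI; (elim conjE)?)
  fix x y
  assume g_block: "\<forall>u\<in>g. \<forall>v\<in>g. ricci_tensor UNIV br m u v = c * m u v"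
    and a_block: "\<forall>X\<in>a. \<forall>Y\<in>a. ricci_tensor UNIV br m X Y = c * m X Y"
  obtain u X where x: "u \<in> g" "X \<in> a" "x = u + X" using decomposition by blast
  obtain v Y where y: "v \<in> g" "Y \<in> a" "y = v + Y" using decomposition by blast
  note ric_left = linear_ricci_tensor_left[OF nondegenerate_on_UNIV subspace_UNIV]
    and ric_right = linear_ricci_tensor_right[OF nondegenerate_on_UNIV subspace_UNIV]
  have "ricci_tensor UNIV br m x y = ricci_tensor UNIV br m u v + ricci_tensor UNIV br m u Y
      + ricci_tensor UNIV br m X v + ricci_tensor UNIV br m X Y"
    unfolding x(3) y(3) linear_add[OF ric_left] linear_add[OF ric_right] by simp
  also have "\<dots> = c * m u v + c * m X Y"
    using g_block a_block x y ricci_g_a[OF x(1) y(2)] ricci_a_g[OF y(1) x(2)] by simp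
  also have "\<dots> = c * m x y"
    using x y orthogonal[OF x(1) y(2)] orthogonal_a_g[OF x(2) y(1)] by (simp add: algebra_simps)
  finally show "ricci_tensor UNIV br m x y = c * m x y" .
qed auto

lemma ricci_op_g_iff:
  assumes H: "\<And>v. m H v = trace_on UNIV (br v)"
  shows "(\<forall>u\<in>g. ricci_op g br m u = c *\<^sub>R u + br H u) \<longleftrightarrow>
    (\<forall>u\<in>g. \<forall>v\<in>g. ricci_tensor UNIV br m u v = c * m u v)"
proof -
  have "ricci_op g br m u = c *\<^sub>R u + br H u \<longleftrightarrow> (\<forall>v\<in>g. ricci_tensor UNIV br m u v = c * m u v)"
    if u: "u \<in> g" for u
  proof -
    have "c *\<^sub>R u + br H u \<in> g"
      using u ideal_g subspace_g by (simp add: subspace_add subspace_scale)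
    then show ?thesis
      using ricci_op_eq_iff[OF nondegenerate_on_g subspace_g] ricci_g_g[OF u _ H] by auto
  qed
  then show ?thesis by blast
qed

lemma trace_on_g_eq_trace_on_UNIV:
  assumes \<phi>: "linear \<phi>" "\<And>v. v \<in> g \<Longrightarrow> \<phi> v \<in> g" "\<And>X. X \<in> a \<Longrightarrow> \<phi> X = 0"
  shows "trace_on g \<phi> = trace_on UNIV \<phi>"
  using trace_on_g_dual_basis[OF \<phi>(1,2)] trace_on_UNIV_split[OF \<phi>(1)] \<phi>(3)[OF F_in_a] by simp

lemma einstein_iff:
  assumes H: "\<And>v. m H v = trace_on UNIV (br v)"
  shows "(\<forall>x. ricci_op UNIV br m x = c *\<^sub>R x) \<longleftrightarrow>
    (\<forall>u\<in>g. ricci_op g br m u = c *\<^sub>R u + br H u) \<and>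
    (\<forall>X\<in>a. \<forall>Y\<in>a. trace_on UNIV (br X \<circ> br Y) = - c * m X Y)"
proof -
  have "trace_on UNIV (br X \<circ> br Y) = - c * m X Y \<longleftrightarrow> ricci_tensor UNIV br m X Y = c * m X Y"
    if "X \<in> a" "Y \<in> a" for X Y
    using ricci_a_a[OF that] by (auto simp: minus_equation_iff)
  then have a_block: "(\<forall>X\<in>a. \<forall>Y\<in>a. trace_on UNIV (br X \<circ> br Y) = - c * m X Y) \<longleftrightarrow>
      (\<forall>X\<in>a. \<forall>Y\<in>a. ricci_tensor UNIV br m X Y = c * m X Y)"
    by blast
  have "(\<forall>x. ricci_op UNIV br m x = c *\<^sub>R x) \<longleftrightarrow> (\<forall>x y. ricci_tensor UNIV br m x y = c * m x y)"
    using ricci_op_eq_scale_iff[OF nondegenerate_on_UNIV subspace_UNIV] by simp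
  also have "\<dots> \<longleftrightarrow> (\<forall>u\<in>g. \<forall>v\<in>g. ricci_tensor UNIV br m u v = c * m u v) \<and>
      (\<forall>X\<in>a. \<forall>Y\<in>a. ricci_tensor UNIV br m X Y = c * m X Y)"
    by (rule ricci_tensor_eq_scale_iff_blocks)
  finally show ?thesis unfolding ricci_op_g_iff[OF H] a_block .
qed

lemma einstein_trace_identity:
  assumes H: "\<And>v. m H v = trace_on UNIV (br v)"
    and einstein: "\<forall>x. ricci_op UNIV br m x = c *\<^sub>R x"
  shows "trace_on g (br H \<circ> br H) = - c * trace_on g (br H)"
proof -
  have Ha: "H \<in> a" by (rule mean_curvature_in_a[OF H])
  have ad_H: "linear (br H)" "linear (br H \<circ> br H)"
    using linear_bracket_right linear_compose by blast+
  have "trace_on g (br H \<circ> br H) = trace_on UNIV (br H \<circ> br H)"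
    using ad_H abelian_a[OF Ha] ideal_g by (intro trace_on_g_eq_trace_on_UNIV) auto
  also have "\<dots> = - c * m H H" using einstein_iff[OF H] einstein Ha by blast
  also have "m H H = trace_on g (br H)"
    using H ad_H abelian_a[OF Ha] ideal_g by (simp add: trace_on_g_eq_trace_on_UNIV)
  finally show ?thesis .
qed

end

lemma (in pseudo_iwasawa_algebra) obtain_dual_bases:
  obtains E F de df where "pseudo_iwasawa_dual_bases m br g a E F de df"
proof -
  obtain E de where "dual_basis m g E de"
    using dual_basis_exists[OF nondegenerate_on_g subspace_g] .
  moreover obtain F df where "dual_basis m a F df"
    using dual_basis_exists[OF nondegenerate_on_a subspace_a] .
  ultimately show ?thesis
    by (intro that pseudo_iwasawa_dual_bases.intro pseudo_iwasawa_algebra_axioms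
        pseudo_iwasawa_dual_bases_axioms.intro)
qed

lemma pseudo_iwasawa_algebraI:
  assumes "lie_algebra br" and "metric m" and "pseudo_iwasawa br m g a"
  shows "pseudo_iwasawa_algebra m br g a"
proof unfold_locales
  show "bilinear m" "m x y = m y x" "(\<forall>y. m x y = 0) \<Longrightarrow> x = 0" for x y
    using assms(2) unfolding metric_def by blast+
  show "bilinear br" "br x y = - br y x" "br x (br y z) + br y (br z x) + br z (br x y) = 0" for x y z
    using assms(1) unfolding lie_algebra_def by blast+
  show "subspace g" "subspace a" "y \<in> g \<Longrightarrow> br x y \<in> g" "nilpotent_on g br"
    "X \<in> a \<Longrightarrow> Y \<in> a \<Longrightarrow> br X Y = 0" "\<exists>u\<in>g. \<exists>X\<in>a. v = u + X"
    "u \<in> g \<Longrightarrow> X \<in> a \<Longrightarrow> m u X = 0" "X \<in> a \<Longrightarrow> m (br X u) w = m u (br X w)"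
    for x y u v w X Y
    using assms(3) unfolding pseudo_iwasawa_def standard_decomposition_def lie_ideal_def
      abelian_subalgebra_def by blast+
qed

theorem theorem3p9:
  fixes br :: "'a::euclidean_space \<Rightarrow> 'a \<Rightarrow> 'a"
    and m :: "'a \<Rightarrow> 'a \<Rightarrow> real"
    and g a :: "'a set" and H :: 'a and lam :: real
  assumes "lie_algebra br" and "solvable br" and "metric m"
    and "pseudo_iwasawa br m g a"
    and H: "\<forall>v. m H v = trace_on UNIV (br v)"
  shows "((\<forall>x. ricci_op UNIV br m x = lam *\<^sub>R x) \<longleftrightarrow>
           ((\<forall>x\<in>g. ricci_op g br m x = lam *\<^sub>R x + br H x) \<and>
            (\<forall>X\<in>a. \<forall>Y\<in>a. trace_on UNIV (br X \<circ> br Y) = - lam * m X Y)))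
       \<and> ((\<forall>x. ricci_op UNIV br m x = lam *\<^sub>R x) \<longrightarrow>
           trace_on g (br H \<circ> br H) = - lam * trace_on g (br H))"
proof -
  interpret pseudo_iwasawa_algebra m br g a
    using assms(1,3,4) by (rule pseudo_iwasawa_algebraI)
  obtain E F de df where "pseudo_iwasawa_dual_bases m br g a E F de df"
    by (rule obtain_dual_bases)
  then interpret pseudo_iwasawa_dual_bases m br g a E F de df .
  show ?thesis
    using einstein_iff[OF H[rule_format]] einstein_trace_identity[OF H[rule_format]] by blast
qed

end
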